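(* Let $k\ge 2$, let $G$ be a $\Gamma_{\times k,t}$-external graph with $\delta(G)\ge k$, and let $H$ be a graph. (i) If $\delta(H)\ge k+1$, then $\Gamma_{\times k,t}(G\,\Box\,H)\ge\Gamma_{\times k,t}(G)\big(\Gamma_{\times k,t}(H)+\delta(H)-k\big)$. (ii) If $H$ is $k$-regular, then $\Gamma_{\times k,t}(G\,\Box\,H)\ge\Gamma_{\times k,t}(G)\cdot\Gamma_{\times k,t}(H)$.
   Context: A set $S\subseteq V(G)$ is a $k$-tuple total dominating set ($k$TDS) of a graph $G$ with $\delta(G)\ge k$ if $|N_G(x)\cap S|\ge k$ for every $x\in V(G)$. The upper $k$-tuple total domination number $\Gamma_{\times k,t}(G)$ is the maximum cardinality of a minimal (with respect to inclusion) $k$TDS of $G$; a minimal $k$TDS of this cardinality is a $\Gamma_{\times k,t}$-set. For $v\in S$, a vertex $v'$ is a $k$-open private neighbor of $v$ with respect to $S$ if $v\in N_G(v')$ and $|N_G(v')\cap S|=k$; it is external if $v'\notin S$. A graph $G$ is $\Gamma_{\times k,t}$-external if it has a $\Gamma_{\times k,t}$-set $S$ such that every vertex of $S$ has an external $k$-open private neighbor with respect to $S$. The Cartesian product $G\,\Box\,H$ has vertex set $V(G)\times V(H)$, with $(g_1,h_1)\sim(g_2,h_2)$ iff either $g_1=g_2$ and $h_1h_2\in E(H)$, or $h_1=h_2$ and $g_1g_2\in E(G)$. *)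

theory Defs
  imports Main
begin

definition graph :: "'a set \<Rightarrow> ('a \<times> 'a) set \<Rightarrow> bool" where
  "graph V E \<longleftrightarrow> finite V \<and> V \<noteq> {} \<and> E \<subseteq> V \<times> V \<and> sym E \<and> irrefl E"

definition nbhd :: "('a \<times> 'a) set \<Rightarrow> 'a \<Rightarrow> 'a set" where
  "nbhd E x = {y. (x, y) \<in> E}"

definition degree :: "('a \<times> 'a) set \<Rightarrow> 'a \<Rightarrow> nat" where
  "degree E x = card (nbhd E x)"

definition min_degree :: "'a set \<Rightarrow> ('a \<times> 'a) set \<Rightarrow> nat" where
  "min_degree V E = Min (degree E ` V)"

definition regular :: "'a set \<Rightarrow> ('a \<times> 'a) set \<Rightarrow> nat \<Rightarrow> bool" where
  "regular V E r \<longleftrightarrow> (\<forall>x\<in>V. degree E x = r)"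

definition kTDS :: "nat \<Rightarrow> 'a set \<Rightarrow> ('a \<times> 'a) set \<Rightarrow> 'a set \<Rightarrow> bool" where
  "kTDS k V E S \<longleftrightarrow> S \<subseteq> V \<and> (\<forall>x\<in>V. card (nbhd E x \<inter> S) \<ge> k)"

definition minimal_kTDS :: "nat \<Rightarrow> 'a set \<Rightarrow> ('a \<times> 'a) set \<Rightarrow> 'a set \<Rightarrow> bool" where
  "minimal_kTDS k V E S \<longleftrightarrow> kTDS k V E S \<and> (\<forall>T. T \<subset> S \<longrightarrow> \<not> kTDS k V E T)"

definition upper_ktdn :: "nat \<Rightarrow> 'a set \<Rightarrow> ('a \<times> 'a) set \<Rightarrow> nat" where
  "upper_ktdn k V E = Max {card S | S. minimal_kTDS k V E S}"

definition upper_ktdn_set :: "nat \<Rightarrow> 'a set \<Rightarrow> ('a \<times> 'a) set \<Rightarrow> 'a set \<Rightarrow> bool" where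
  "upper_ktdn_set k V E S \<longleftrightarrow> minimal_kTDS k V E S \<and> card S = upper_ktdn k V E"

definition ext_kopn :: "nat \<Rightarrow> 'a set \<Rightarrow> ('a \<times> 'a) set \<Rightarrow> 'a set \<Rightarrow> 'a \<Rightarrow> 'a \<Rightarrow> bool" where
  "ext_kopn k V E S v v' \<longleftrightarrow> v' \<in> V \<and> v \<in> nbhd E v' \<and> card (nbhd E v' \<inter> S) = k \<and> v' \<notin> S"

definition upper_ktdn_external :: "nat \<Rightarrow> 'a set \<Rightarrow> ('a \<times> 'a) set \<Rightarrow> bool" where
  "upper_ktdn_external k V E \<longleftrightarrow>
     (\<exists>S. upper_ktdn_set k V E S \<and> (\<forall>v\<in>S. \<exists>v'. ext_kopn k V E S v v'))"

definition cart_edges :: "('a \<times> 'a) set \<Rightarrow> 'b set \<Rightarrow> ('b \<times> 'b) set \<Rightarrow> 'a set \<Rightarrow>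
    (('a \<times> 'b) \<times> ('a \<times> 'b)) set" where
  "cart_edges EG VH EH VG =
     {((g1, h1), (g2, h2)). g1 \<in> VG \<and> g2 \<in> VG \<and> h1 \<in> VH \<and> h2 \<in> VH \<and>
        ((g1 = g2 \<and> (h1, h2) \<in> EH) \<or> (h1 = h2 \<and> (g1, g2) \<in> EG))}"

end

theory Submission
  imports Defs
begin

text \<open>If S is a \<open>\<Gamma>\<^sub>\<times>\<^sub>k\<^sub>,\<^sub>t\<close>-set of G in which every vertex has an external k-open private
neighbour, then S \<times> V(H) is a minimal kTDS of G \<box> H: it dominates every vertex already
inside its G-layer, and deleting (v, h) leaves (v', h) with only k - 1 neighbours in the set,
where v' is the external private neighbour of v (as v' \<notin> S, all neighbours of (v', h) in
S \<times> V(H) lie in the G-layer of h). Hence \<open>\<Gamma>\<^sub>\<times>\<^sub>k\<^sub>,\<^sub>t(G \<box> H) \<ge> \<Gamma>\<^sub>\<times>\<^sub>k\<^sub>,\<^sub>t(G) |V(H)|\<close>.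
Both bounds then follow from \<open>\<Gamma>\<^sub>\<times>\<^sub>k\<^sub>,\<^sub>t(H) + \<delta>(H) - k \<le> |V(H)|\<close>: a minimal kTDS D of H
has a vertex y with exactly k neighbours in D (witnessing that some vertex of D cannot be
removed), and the remaining \<open>deg y - k\<close> neighbours of y lie outside D.\<close>

lemma min_degree_le_degree:
  "finite V \<Longrightarrow> x \<in> V \<Longrightarrow> min_degree V E \<le> degree E x"
  unfolding min_degree_def by simp

lemma regular_min_degree:
  "V \<noteq> {} \<Longrightarrow> regular V E r \<Longrightarrow> min_degree V E = r"
  unfolding regular_def min_degree_def by (simp add: image_constant_conv)

lemma nbhd_subset:
  "E \<subseteq> V \<times> V \<Longrightarrow> nbhd E x \<subseteq> V"
  unfolding nbhd_def by auto

lemma kTDS_vertex_set: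
  assumes "E \<subseteq> V \<times> V" and "\<And>x. x \<in> V \<Longrightarrow> k \<le> degree E x"
  shows "kTDS k V E V"
  using assms nbhd_subset[OF assms(1)] unfolding kTDS_def degree_def
  by (simp add: Int_absorb2)

lemma minimal_kTDS_exists:
  assumes "finite V" and "kTDS k V E S"
  shows "\<exists>D. minimal_kTDS k V E D"
proof -
  have "finite {T. kTDS k V E T}"
    by (rule finite_subset[of _ "Pow V"]) (auto simp: kTDS_def assms(1))
  then obtain D where "D \<in> {T. kTDS k V E T}"
      and "\<forall>T \<in> {T. kTDS k V E T}. T \<le> D \<longrightarrow> D = T"
    using finite_has_minimal[of "{T. kTDS k V E T}"] assms(2) by blast
  then show ?thesis
    unfolding minimal_kTDS_def by blast
qed

lemma finite_minimal_kTDS_cards: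
  "finite V \<Longrightarrow> finite {card S | S. minimal_kTDS k V E S}"
  by (rule finite_subset[of _ "{0..card V}"])
    (auto simp: minimal_kTDS_def kTDS_def intro: card_mono)

lemma card_le_upper_ktdn:
  "finite V \<Longrightarrow> minimal_kTDS k V E S \<Longrightarrow> card S \<le> upper_ktdn k V E"
  unfolding upper_ktdn_def using finite_minimal_kTDS_cards by (intro Max_ge) auto

lemma upper_ktdn_le:
  assumes "finite V" and "minimal_kTDS k V E S"
    and "\<And>D. minimal_kTDS k V E D \<Longrightarrow> card D \<le> B"
  shows "upper_ktdn k V E \<le> B"
  unfolding upper_ktdn_def using assms finite_minimal_kTDS_cards[OF assms(1)]
  by (subst Max_le_iff) auto

lemma minimal_kTDS_tight_vertex:
  assumes D: "minimal_kTDS k V E D" and "D \<noteq> {}" and "finite V"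
  shows "\<exists>y\<in>V. card (nbhd E y \<inter> D) \<le> k"
proof -
  obtain v where v: "v \<in> D"
    using assms(2) by blast
  have "\<not> kTDS k V E (D - {v})"
    using D v unfolding minimal_kTDS_def by blast
  then obtain y where y: "y \<in> V" "card (nbhd E y \<inter> D - {v}) < k"
    using D unfolding minimal_kTDS_def kTDS_def by (auto simp: Int_Diff)
  have "finite (nbhd E y \<inter> D)"
    using D assms(3) unfolding minimal_kTDS_def kTDS_def by (meson finite_Int finite_subset)
  then have "card (nbhd E y \<inter> D) \<le> card (nbhd E y \<inter> D - {v}) + 1"
    by (cases "v \<in> nbhd E y") (auto simp: card_Diff_singleton_if card_gt_0_iff v)
  then show ?thesis
    using y by (intro bexI[of _ y]) linarith+
qed

lemma minimal_kTDS_card_bound: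
  assumes g: "graph V E" and D: "minimal_kTDS k V E D" and "1 \<le> k"
  shows "card D + min_degree V E - k \<le> card V"
proof -
  have fV: "finite V" and "V \<noteq> {}" and EV: "E \<subseteq> V \<times> V"
    using g unfolding graph_def by auto
  have DV: "D \<subseteq> V" and cov: "\<And>x. x \<in> V \<Longrightarrow> k \<le> card (nbhd E x \<inter> D)"
    using D unfolding minimal_kTDS_def kTDS_def by auto
  have "D \<noteq> {}"
    using cov \<open>V \<noteq> {}\<close> \<open>1 \<le> k\<close> by fastforce
  then obtain y where y: "y \<in> V" "card (nbhd E y \<inter> D) \<le> k"
    using minimal_kTDS_tight_vertex[OF D _ fV] by blast
  have fN: "finite (nbhd E y)"
    using nbhd_subset[OF EV] fV finite_subset by blast
  have "min_degree V E \<le> degree E y"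
    using min_degree_le_degree[OF fV y(1)] .
  also have "\<dots> = card (nbhd E y \<inter> D) + card (nbhd E y - D)"
    unfolding degree_def using fN by (simp add: card_Int_Diff)
  also have "card (nbhd E y - D) \<le> card (V - D)"
    using nbhd_subset[OF EV] fV by (intro card_mono) auto
  also have "card (V - D) = card V - card D"
    using DV fV by (simp add: card_Diff_subset finite_subset)
  finally show ?thesis
    using y(2) card_mono[OF fV DV] by linarith
qed

lemma upper_ktdn_plus_min_degree_le:
  assumes g: "graph V E" and "1 \<le> k" and "k \<le> min_degree V E"
  shows "upper_ktdn k V E + min_degree V E - k \<le> card V"
proof -
  have fV: "finite V" and EV: "E \<subseteq> V \<times> V"
    using g unfolding graph_def by auto
  have "kTDS k V E V"
    using kTDS_vertex_set[OF EV] min_degree_le_degree[OF fV] assms(3) le_trans by blast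
  then obtain D where D: "minimal_kTDS k V E D"
    using minimal_kTDS_exists[OF fV] by blast
  have "min_degree V E - k \<le> card V"
    using minimal_kTDS_card_bound[OF g D \<open>1 \<le> k\<close>] by linarith
  moreover from D have "upper_ktdn k V E \<le> card V + k - min_degree V E"
  proof (rule upper_ktdn_le[OF fV])
    fix D assume "minimal_kTDS k V E D"
    then show "card D \<le> card V + k - min_degree V E"
      using minimal_kTDS_card_bound[OF g _ \<open>1 \<le> k\<close>] assms(3) by fastforce
  qed
  ultimately show ?thesis
    using assms(3) by linarith
qed

lemma nbhd_cart_edges:
  assumes "EG \<subseteq> VG \<times> VG" and "EH \<subseteq> VH \<times> VH" and "g \<in> VG" and "h \<in> VH"
  shows "nbhd (cart_edges EG VH EH VG) (g, h) = (\<lambda>g'. (g', h)) ` nbhd EG g \<union> Pair g ` nbhd EH h"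
  using assms unfolding nbhd_def cart_edges_def by auto

lemma cart_product_minimal_kTDS:
  assumes g: "graph VG EG" and h: "graph VH EH"
    and S: "kTDS k VG EG S"
    and ext: "\<forall>v\<in>S. \<exists>v'. ext_kopn k VG EG S v v'"
  shows "minimal_kTDS k (VG \<times> VH) (cart_edges EG VH EH VG) (S \<times> VH)"
proof -
  let ?C = "cart_edges EG VH EH VG" and ?layer = "\<lambda>h A. (\<lambda>g'. (g', h)) ` A"
  have fVG: "finite VG" and fVH: "finite VH"
    and EVG: "EG \<subseteq> VG \<times> VG" and EVH: "EH \<subseteq> VH \<times> VH"
    using g h unfolding graph_def by auto
  have SV: "S \<subseteq> VG" and cov: "\<And>x. x \<in> VG \<Longrightarrow> k \<le> card (nbhd EG x \<inter> S)"
    using S unfolding kTDS_def by auto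
  have card_layer: "card (?layer h A) = card A" for h A
    by (rule card_image) (auto simp: inj_on_def)
  have layer_sub: "?layer h (nbhd EG g \<inter> S) \<subseteq> nbhd ?C (g, h) \<inter> (S \<times> VH)"
    if "g \<in> VG" "h \<in> VH" for g h
    using nbhd_cart_edges[OF EVG EVH that] that by auto
  have outside_S: "nbhd ?C (g, h) \<inter> (S \<times> VH) = ?layer h (nbhd EG g \<inter> S)"
    if "g \<in> VG" "h \<in> VH" "g \<notin> S" for g h
    using nbhd_cart_edges[OF EVG EVH that(1,2)] that by auto
  have finite_layer: "finite (?layer h (nbhd EG g \<inter> S))" for g h
    using SV fVG by (meson finite_Int finite_imageI finite_subset)
  have kTDS_prod: "kTDS k (VG \<times> VH) ?C (S \<times> VH)"
    unfolding kTDS_def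
  proof (intro conjI ballI)
    show "S \<times> VH \<subseteq> VG \<times> VH"
      using SV by auto
  next
    fix p assume "p \<in> VG \<times> VH"
    then obtain g h where p: "p = (g, h)" "g \<in> VG" "h \<in> VH" by auto
    have "k \<le> card (?layer h (nbhd EG g \<inter> S))"
      unfolding card_layer using cov[OF p(2)] .
    also have "\<dots> \<le> card (nbhd ?C p \<inter> (S \<times> VH))"
      using layer_sub[OF p(2,3)] p(1) SV fVG fVH
      by (intro card_mono) (auto intro: finite_subset)
    finally show "k \<le> card (nbhd ?C p \<inter> (S \<times> VH))" .
  qed
  have "\<not> kTDS k (VG \<times> VH) ?C T" if T: "T \<subset> S \<times> VH" for T
  proof
    assume kT: "kTDS k (VG \<times> VH) ?C T"
    obtain v h where vh: "v \<in> S" "h \<in> VH" "(v, h) \<notin> T"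
      using T by auto
    obtain v' where "ext_kopn k VG EG S v v'"
      using ext vh(1) by blast
    then have v': "v' \<in> VG" "v \<in> nbhd EG v'" "card (nbhd EG v' \<inter> S) = k" "v' \<notin> S"
      unfolding ext_kopn_def by auto
    have "nbhd ?C (v', h) \<inter> T \<subseteq> ?layer h (nbhd EG v' \<inter> S) - {(v, h)}"
      using outside_S[OF v'(1) vh(2) v'(4)] T vh(3) by auto
    then have "card (nbhd ?C (v', h) \<inter> T) \<le> card (?layer h (nbhd EG v' \<inter> S) - {(v, h)})"
      using finite_layer by (intro card_mono) auto
    also have "\<dots> < card (?layer h (nbhd EG v' \<inter> S))"
      using v'(2) vh(1) finite_layer by (intro card_Diff1_less) auto
    also have "\<dots> = k"
      unfolding card_layer by (fact v'(3))
    finally show False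
      using kT v'(1) vh(2) unfolding kTDS_def by (meson SigmaI leD)
  qed
  then show ?thesis
    using kTDS_prod unfolding minimal_kTDS_def by blast
qed

theorem mainTheorem12:
  fixes VG :: "'a set" and EG :: "('a \<times> 'a) set"
    and VH :: "'b set" and EH :: "('b \<times> 'b) set" and k :: nat
  assumes "k \<ge> 2"
    and "graph VG EG" and "graph VH EH"
    and "min_degree VG EG \<ge> k"
    and "upper_ktdn_external k VG EG"
  shows "(min_degree VH EH \<ge> k + 1 \<longrightarrow>
            upper_ktdn k (VG \<times> VH) (cart_edges EG VH EH VG) \<ge>
            upper_ktdn k VG EG * (upper_ktdn k VH EH + min_degree VH EH - k))
       \<and> (regular VH EH k \<longrightarrow>
            upper_ktdn k (VG \<times> VH) (cart_edges EG VH EH VG) \<ge>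
            upper_ktdn k VG EG * upper_ktdn k VH EH)"
proof -
  obtain S where S: "upper_ktdn_set k VG EG S" and ext: "\<forall>v\<in>S. \<exists>v'. ext_kopn k VG EG S v v'"
    using assms(5) unfolding upper_ktdn_external_def by blast
  have fin: "finite VG" "finite VH" and "VH \<noteq> {}"
    using assms(2,3) unfolding graph_def by auto
  have "minimal_kTDS k (VG \<times> VH) (cart_edges EG VH EH VG) (S \<times> VH)"
    using cart_product_minimal_kTDS[OF assms(2,3) _ ext] S
    unfolding upper_ktdn_set_def minimal_kTDS_def by blast
  then have "card (S \<times> VH) \<le> upper_ktdn k (VG \<times> VH) (cart_edges EG VH EH VG)"
    using fin by (intro card_le_upper_ktdn) auto
  then have product_bound:
    "upper_ktdn k VG EG * card VH \<le> upper_ktdn k (VG \<times> VH) (cart_edges EG VH EH VG)"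
    using S unfolding upper_ktdn_set_def card_cartesian_product by simp
  have H_bound: "upper_ktdn k VH EH + min_degree VH EH - k \<le> card VH"
    if "k \<le> min_degree VH EH"
    using upper_ktdn_plus_min_degree_le[OF assms(3) _ that] assms(1) by simp
  have "upper_ktdn k VH EH + min_degree VH EH - k \<le> card VH"
    if "k + 1 \<le> min_degree VH EH"
    using H_bound that by simp
  moreover have "upper_ktdn k VH EH \<le> card VH" if "regular VH EH k"
    using H_bound regular_min_degree[OF \<open>VH \<noteq> {}\<close> that] by simp
  ultimately show ?thesis
    using product_bound by (meson le_trans mult_le_mono2)
qed

end
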